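(* Let $S$ be a semigroup with unit element $1$, let $X$ be a nonempty set, and let $S_1,\dots,S_n$ be unital subsemigroups of $S$ acting on $X$ from the right (with $x(st)=(xs)t$ and the unit acting as the identity). Suppose that each $S_j$ is left-amenable and that the actions of the $S_j$ commute, i.e. $(xs)t=(xt)s$ for all $x\in X$, $s\in S_i$, $t\in S_j$, $i\neq j$. For $s\in S$ let $S_s:\mathbb{C}^X\to\mathbb{C}^X$ be the Koopman operator $S_sf(x)=f(xs)$. Then for every bounded function $f:X\to\mathbb{C}$ the following are equivalent: (i) $(S_{s_1}-\mathrm{Id})(S_{s_2}-\mathrm{Id})\cdots(S_{s_n}-\mathrm{Id})f=0$ for all $s_j\in S_j$, $j=1,\dots,n$; (ii) there exist functions $f_1,\dots,f_n:X\to\mathbb{C}$ with $f=f_1+\cdots+f_n$ such that for each $j$ the function $f_j$ is $S_j$-invariant, i.e. $S_{s}f_j=f_j$ for all $s\in S_j$.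
   Context: A semigroup $S_j$ is left-amenable if there is a left-invariant mean on $\ell^\infty(S_j)$, i.e. a positive linear functional $\mu$ on $\ell^\infty(S_j)$ with $\mu(\mathbf 1)=1$ and $\mu(g(s\,\cdot))=\mu(g)$ for all $g\in\ell^\infty(S_j)$, $s\in S_j$. *)

theory Defs
  imports "HOL-Analysis.Analysis"
begin

text \<open>Left-invariant mean on bounded complex functions on a subset T of a monoid.
  Elements of l-infinity(T) are represented by functions bounded on T; the mean must
  only depend on the values on T.\<close>
definition left_invariant_mean :: "'a::monoid_mult set \<Rightarrow> (('a \<Rightarrow> complex) \<Rightarrow> complex) \<Rightarrow> bool" where
  "left_invariant_mean T \<mu> \<longleftrightarrow>
     (\<forall>g h. bounded (g ` T) \<longrightarrow> (\<forall>t\<in>T. g t = h t) \<longrightarrow> \<mu> g = \<mu> h) \<and>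
     (\<forall>g h a b. bounded (g ` T) \<longrightarrow> bounded (h ` T) \<longrightarrow>
        \<mu> (\<lambda>t. a * g t + b * h t) = a * \<mu> g + b * \<mu> h) \<and>
     (\<forall>g. bounded (g ` T) \<longrightarrow> (\<forall>t\<in>T. Im (g t) = 0 \<and> Re (g t) \<ge> 0) \<longrightarrow>
        Im (\<mu> g) = 0 \<and> Re (\<mu> g) \<ge> 0) \<and>
     \<mu> (\<lambda>_. 1) = 1 \<and>
     (\<forall>g. \<forall>s\<in>T. bounded (g ` T) \<longrightarrow> \<mu> (\<lambda>t. g (s * t)) = \<mu> g)"

definition left_amenable :: "'a::monoid_mult set \<Rightarrow> bool" where
  "left_amenable T \<longleftrightarrow> (\<exists>\<mu>. left_invariant_mean T \<mu>)"

definition unital_subsemigroup :: "'a::monoid_mult set \<Rightarrow> bool" where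
  "unital_subsemigroup T \<longleftrightarrow> 1 \<in> T \<and> (\<forall>s\<in>T. \<forall>t\<in>T. s * t \<in> T)"

definition right_action :: "('x \<Rightarrow> 'a::monoid_mult \<Rightarrow> 'x) \<Rightarrow> bool" where
  "right_action act \<longleftrightarrow> (\<forall>x. act x 1 = x) \<and> (\<forall>x s t. act x (s * t) = act (act x s) t)"

definition koopman :: "('x \<Rightarrow> 'a \<Rightarrow> 'x) \<Rightarrow> 'a \<Rightarrow> ('x \<Rightarrow> complex) \<Rightarrow> ('x \<Rightarrow> complex)" where
  "koopman act s f = (\<lambda>x. f (act x s))"

text \<open>diff_chain act s k f = (S_{s 1} - Id) ... (S_{s k} - Id) f.\<close>
fun diff_chain :: "('x \<Rightarrow> 'a \<Rightarrow> 'x) \<Rightarrow> (nat \<Rightarrow> 'a) \<Rightarrow> nat \<Rightarrow> ('x \<Rightarrow> complex) \<Rightarrow> ('x \<Rightarrow> complex)" where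
  "diff_chain act s 0 f = f"
| "diff_chain act s (Suc k) f = diff_chain act s k (\<lambda>x. koopman act (s (Suc k)) f x - f x)"

end

theory Submission
  imports Defs
begin

text \<open>A left-invariant mean \<open>\<mu>\<close> on \<open>S\<^sub>n\<close> yields the orbit mean
  \<open>P f (x) = \<mu> (u \<mapsto> f (x u))\<close>, which is \<open>S\<^sub>n\<close>-invariant by left invariance of \<open>\<mu>\<close> and fixes
  every \<open>S\<^sub>n\<close>-invariant function. If \<open>D\<close> is a product of differences \<open>S\<^sub>s - Id\<close> with
  \<open>s \<in> S\<^sub>1, \<dots>, S\<^sub>n\<^sub>-\<^sub>1\<close>, condition (i) says that \<open>D f\<close> is \<open>S\<^sub>n\<close>-invariant; as the actions
  commute, \<open>D P f = P D f = D f\<close>. Hence \<open>f - P f\<close> satisfies (i) for \<open>n - 1\<close>, and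
  \<open>f = (f - P f) + P f\<close> gives the decomposition. Conversely, the differences commute and
  \<open>S\<^sub>s - Id\<close> annihilates \<open>S\<^sub>j\<close>-invariant functions for \<open>s \<in> S\<^sub>j\<close>.\<close>

section \<open>Left-invariant means\<close>

lemma bounded_const_image: "bounded ((\<lambda>_. c) ` S)"
  by (rule bounded_subset[of "{c}"]) auto

lemma bounded_mult_comp:
  fixes g :: "'a \<Rightarrow> 'b::real_normed_algebra"
  assumes "bounded (g ` S)"
  shows "bounded ((\<lambda>x. c * g x) ` S)"
  using bounded_linear_image[OF assms bounded_linear_mult_right[of c]] by (simp add: image_image)

context
  fixes T :: "'a::monoid_mult set" and \<mu> :: "('a \<Rightarrow> complex) \<Rightarrow> complex"
  assumes mean: "left_invariant_mean T \<mu>"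
begin

lemma mean_cong: "bounded (g ` T) \<Longrightarrow> (\<And>t. t \<in> T \<Longrightarrow> g t = h t) \<Longrightarrow> \<mu> g = \<mu> h"
  using mean unfolding left_invariant_mean_def by blast

lemma mean_linear:
  "bounded (g ` T) \<Longrightarrow> bounded (h ` T) \<Longrightarrow> \<mu> (\<lambda>t. a * g t + b * h t) = a * \<mu> g + b * \<mu> h"
  using mean unfolding left_invariant_mean_def by blast

lemma mean_nonneg:
  "bounded (g ` T) \<Longrightarrow> (\<And>t. t \<in> T \<Longrightarrow> Im (g t) = 0 \<and> Re (g t) \<ge> 0) \<Longrightarrow>
    Im (\<mu> g) = 0 \<and> Re (\<mu> g) \<ge> 0"
  using mean unfolding left_invariant_mean_def by blast

lemma mean_left_translate: "s \<in> T \<Longrightarrow> bounded (g ` T) \<Longrightarrow> \<mu> (\<lambda>t. g (s * t)) = \<mu> g"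
  using mean unfolding left_invariant_mean_def by blast

lemma mean_const: "\<mu> (\<lambda>_. c) = c"
proof -
  have "\<mu> (\<lambda>_. c * 1 + 0 * 1) = c * \<mu> (\<lambda>_. 1) + 0 * \<mu> (\<lambda>_. 1)"
    by (rule mean_linear) (rule bounded_const_image)+
  then show ?thesis
    using mean by (simp add: left_invariant_mean_def)
qed

lemma mean_eq_const_on: "(\<And>t. t \<in> T \<Longrightarrow> g t = c) \<Longrightarrow> \<mu> g = c"
  using mean_cong[OF bounded_const_image, of c g] mean_const by metis

lemma mean_diff: "bounded (g ` T) \<Longrightarrow> bounded (h ` T) \<Longrightarrow> \<mu> (\<lambda>t. g t - h t) = \<mu> g - \<mu> h"
  using mean_linear[of g h 1 "-1"] by simp

lemma norm_mean_real_le: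
  assumes bdd: "bounded (w ` T)" and real: "\<And>t. t \<in> T \<Longrightarrow> Im (w t) = 0 \<and> \<bar>Re (w t)\<bar> \<le> M"
  shows "norm (\<mu> w) \<le> M"
proof -
  have shifted: "Im (of_real M + b * \<mu> w) = 0 \<and> Re (of_real M + b * \<mu> w) \<ge> 0"
    if b: "b = 1 \<or> b = -1" for b
  proof -
    have "bounded ((\<lambda>t. of_real M * 1 + b * w t) ` T)"
      using bdd by (intro bounded_plus_comp bounded_mult_comp bounded_const_image)
    then have "Im (\<mu> (\<lambda>t. of_real M * 1 + b * w t)) = 0 \<and> Re (\<mu> (\<lambda>t. of_real M * 1 + b * w t)) \<ge> 0"
      by (rule mean_nonneg) (use real b in force)
    moreover have "\<mu> (\<lambda>t. of_real M * 1 + b * w t) = of_real M + b * \<mu> w"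
      using mean_linear[OF bounded_const_image bdd, of 1 "of_real M" b] mean_const by simp
    ultimately show ?thesis
      by simp
  qed
  from shifted[of 1] shifted[of "-1"] have "Im (\<mu> w) = 0" "\<bar>Re (\<mu> w)\<bar> \<le> M"
    by auto
  then show ?thesis
    by (simp add: cmod_eq_Re)
qed

lemma norm_mean_le:
  assumes bdd: "bounded (g ` T)" and le: "\<And>t. t \<in> T \<Longrightarrow> norm (g t) \<le> M"
  shows "norm (\<mu> g) \<le> 2 * M"
proof -
  define re where "re = (\<lambda>t. complex_of_real (Re (g t)))"
  define im where "im = (\<lambda>t. complex_of_real (Im (g t)))"
  have re_le: "Im (re t) = 0 \<and> \<bar>Re (re t)\<bar> \<le> M" if "t \<in> T" for t
    using le[OF that] abs_Re_le_cmod[of "g t"] unfolding re_def by simp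
  have im_le: "Im (im t) = 0 \<and> \<bar>Re (im t)\<bar> \<le> M" if "t \<in> T" for t
    using le[OF that] abs_Im_le_cmod[of "g t"] unfolding im_def by simp
  have re_bdd: "bounded (re ` T)" and im_bdd: "bounded (im ` T)"
    unfolding bounded_iff using re_le im_le by (auto simp: cmod_eq_Re)
  have "g = (\<lambda>t. 1 * re t + \<i> * im t)"
    unfolding re_def im_def by (rule ext) (simp add: complex_eq_iff)
  then have "\<mu> g = \<mu> re + \<i> * \<mu> im"
    using mean_linear[OF re_bdd im_bdd, of 1 \<i>] by simp
  then have "norm (\<mu> g) \<le> norm (\<mu> re) + norm (\<mu> im)"
    by (metis norm_ii norm_mult norm_triangle_ineq mult_1)
  also have "\<dots> \<le> M + M"
    using norm_mean_real_le[OF re_bdd re_le] norm_mean_real_le[OF im_bdd im_le] by simp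
  finally show ?thesis
    by simp
qed

end

section \<open>Chains of differences\<close>

lemma diff_chain_cong:
  "(\<And>i. i \<in> {1..k} \<Longrightarrow> s i = s' i) \<Longrightarrow> diff_chain act s k g = diff_chain act s' k g"
  by (induction k arbitrary: g) auto

lemma diff_chain_zero: "diff_chain act s k (\<lambda>_. 0) = (\<lambda>_. 0)"
  by (induction k) (auto simp: koopman_def)

lemma diff_chain_diff:
  "diff_chain act s k (\<lambda>x. f x - g x) = (\<lambda>x. diff_chain act s k f x - diff_chain act s k g x)"
proof (induction k arbitrary: f g)
  case (Suc k)
  have "(\<lambda>x. koopman act (s (Suc k)) (\<lambda>x. f x - g x) x - (f x - g x))
      = (\<lambda>x. (koopman act (s (Suc k)) f x - f x) - (koopman act (s (Suc k)) g x - g x))"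
    by (simp add: koopman_def algebra_simps)
  then show ?case
    using Suc by simp
qed simp

lemma diff_chain_sum:
  "diff_chain act s k (\<lambda>x. \<Sum>j\<in>J. g j x) = (\<lambda>x. \<Sum>j\<in>J. diff_chain act s k (g j) x)"
proof (induction k arbitrary: g)
  case (Suc k)
  have "(\<lambda>x. koopman act (s (Suc k)) (\<lambda>x. \<Sum>j\<in>J. g j x) x - (\<Sum>j\<in>J. g j x))
      = (\<lambda>x. \<Sum>j\<in>J. koopman act (s (Suc k)) (g j) x - g j x)"
    by (simp add: koopman_def sum_subtractf)
  then show ?case
    using Suc by simp
qed simp

lemma diff_chain_koopman_diff:
  assumes "\<And>i x. i \<in> {1..k} \<Longrightarrow> act (act x (s i)) t = act (act x t) (s i)"
  shows "diff_chain act s k (\<lambda>x. g (act x t) - g x)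
       = (\<lambda>x. diff_chain act s k g (act x t) - diff_chain act s k g x)"
using assms proof (induction k arbitrary: g)
  case (Suc k)
  let ?G = "\<lambda>x. g (act x (s (Suc k))) - g x"
  have "act (act x (s (Suc k))) t = act (act x t) (s (Suc k))" for x
    using Suc.prems by auto
  then have "(\<lambda>x. koopman act (s (Suc k)) (\<lambda>x. g (act x t) - g x) x - (g (act x t) - g x))
      = (\<lambda>x. ?G (act x t) - ?G x)"
    by (simp add: koopman_def algebra_simps)
  moreover have "diff_chain act s k (\<lambda>x. ?G (act x t) - ?G x)
      = (\<lambda>x. diff_chain act s k ?G (act x t) - diff_chain act s k ?G x)"
    using Suc by auto
  ultimately show ?case
    by (simp add: koopman_def)
qed simp

lemma diff_chain_eq_zero_if_invariant:
  assumes "j \<in> {1..k}" and inv: "\<And>x. g (act x (s j)) = g x"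
    and comm: "\<And>i x. i \<in> {1..k} \<Longrightarrow> act (act x (s i)) (s j) = act (act x (s j)) (s i)"
  shows "diff_chain act s k g = (\<lambda>_. 0)"
using assms proof (induction k arbitrary: g)
  case (Suc k)
  let ?h = "\<lambda>x. koopman act (s (Suc k)) g x - g x"
  show ?case
  proof (cases "j = Suc k")
    case True
    then have "?h = (\<lambda>_. 0)"
      using Suc.prems by (auto simp: koopman_def)
    then show ?thesis
      by (simp add: diff_chain_zero)
  next
    case False
    then have j: "j \<in> {1..k}"
      using Suc.prems by auto
    have swap: "act (act x (s (Suc k))) (s j) = act (act x (s j)) (s (Suc k))" for x
      using Suc.prems(3) by auto
    have "?h (act x (s j)) = ?h x" for x
      using Suc.prems(2) by (simp add: koopman_def flip: swap)
    then show ?thesis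
      using Suc.IH[OF j] Suc.prems(3) by auto
  qed
qed simp

section \<open>Orbit means\<close>

definition orbit_mean ::
    "(('a \<Rightarrow> complex) \<Rightarrow> complex) \<Rightarrow> ('x \<Rightarrow> 'a \<Rightarrow> 'x) \<Rightarrow> ('x \<Rightarrow> complex) \<Rightarrow> 'x \<Rightarrow> complex" where
  "orbit_mean \<mu> act f x = \<mu> (\<lambda>u. f (act x u))"

lemma bounded_orbit_image: "bounded (range f) \<Longrightarrow> bounded ((\<lambda>u. f (act x u)) ` T)"
  by (rule bounded_subset) auto

context
  fixes T :: "'a::monoid_mult set" and \<mu> :: "('a \<Rightarrow> complex) \<Rightarrow> complex"
  assumes mean: "left_invariant_mean T \<mu>"
begin

lemma bounded_orbit_mean:
  assumes "bounded (range f)"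
  shows "bounded (range (orbit_mean \<mu> act f))"
proof -
  obtain B where "\<And>y. norm (f y) \<le> B"
    using assms unfolding bounded_iff by auto
  then have "norm (orbit_mean \<mu> act f x) \<le> 2 * B" for x
    unfolding orbit_mean_def by (intro norm_mean_le[OF mean bounded_orbit_image[OF assms]])
  then show ?thesis
    unfolding bounded_iff by auto
qed

lemma koopman_orbit_mean:
  assumes "right_action act" "bounded (range f)" "s \<in> T"
  shows "koopman act s (orbit_mean \<mu> act f) = orbit_mean \<mu> act f"
proof
  fix x
  have "orbit_mean \<mu> act f (act x s) = \<mu> (\<lambda>u. (\<lambda>v. f (act x v)) (s * u))"
    using assms(1) unfolding orbit_mean_def right_action_def by simp
  also have "\<dots> = orbit_mean \<mu> act f x"
    unfolding orbit_mean_def by (rule mean_left_translate[OF mean assms(3) bounded_orbit_image[OF assms(2)]])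
  finally show "koopman act s (orbit_mean \<mu> act f) x = orbit_mean \<mu> act f x"
    by (simp add: koopman_def)
qed

lemma orbit_mean_of_invariant:
  assumes "\<And>t x. t \<in> T \<Longrightarrow> g (act x t) = g x"
  shows "orbit_mean \<mu> act g = g"
  unfolding orbit_mean_def using mean_eq_const_on[OF mean] assms by auto

lemma orbit_mean_koopman_diff:
  assumes comm: "\<And>u x. u \<in> T \<Longrightarrow> act (act x u) t = act (act x t) u" and bdd: "bounded (range g)"
  shows "orbit_mean \<mu> act (\<lambda>x. g (act x t) - g x)
       = (\<lambda>x. orbit_mean \<mu> act g (act x t) - orbit_mean \<mu> act g x)"
proof
  fix x
  have bdd_shift: "bounded ((\<lambda>u. g (act (act x u) t)) ` T)"
    by (rule bounded_subset[OF bdd]) auto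
  have "orbit_mean \<mu> act (\<lambda>x. g (act x t) - g x) x
      = \<mu> (\<lambda>u. g (act (act x u) t)) - \<mu> (\<lambda>u. g (act x u))"
    unfolding orbit_mean_def by (rule mean_diff[OF mean bdd_shift bounded_orbit_image[OF bdd]])
  also have "\<mu> (\<lambda>u. g (act (act x u) t)) = \<mu> (\<lambda>u. g (act (act x t) u))"
    by (rule mean_cong[OF mean bdd_shift]) (simp add: comm)
  finally show "orbit_mean \<mu> act (\<lambda>x. g (act x t) - g x) x
      = orbit_mean \<mu> act g (act x t) - orbit_mean \<mu> act g x"
    by (simp add: orbit_mean_def)
qed

lemma diff_chain_orbit_mean:
  assumes "\<And>i u x. i \<in> {1..k} \<Longrightarrow> u \<in> T \<Longrightarrow> act (act x u) (s i) = act (act x (s i)) u"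
    and "bounded (range g)"
  shows "diff_chain act s k (orbit_mean \<mu> act g) = orbit_mean \<mu> act (diff_chain act s k g)"
using assms proof (induction k arbitrary: g)
  case (Suc k)
  let ?G = "\<lambda>x. g (act x (s (Suc k))) - g x"
  have "bounded (range ?G)"
    using Suc.prems(2) by (intro bounded_minus_comp) (auto intro: bounded_subset)
  moreover have "(\<lambda>x. koopman act (s (Suc k)) (orbit_mean \<mu> act g) x - orbit_mean \<mu> act g x)
      = orbit_mean \<mu> act ?G"
    using orbit_mean_koopman_diff[where t="s (Suc k)" and g=g] Suc.prems by (simp add: koopman_def)
  ultimately show ?case
    using Suc by (simp add: koopman_def)
qed simp

end

section \<open>Decomposition into invariant functions\<close>

lemma diff_chain_sub_orbit_mean_eq_zero:
  assumes mean: "left_invariant_mean T \<mu>"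
    and comm: "\<And>i u x. i \<in> {1..m} \<Longrightarrow> u \<in> T \<Longrightarrow> act (act x u) (s i) = act (act x (s i)) u"
    and bdd: "bounded (range f)"
    and vanish: "\<And>t. t \<in> T \<Longrightarrow> diff_chain act (s(Suc m := t)) (Suc m) f = (\<lambda>_. 0)"
  shows "diff_chain act s m (\<lambda>x. f x - orbit_mean \<mu> act f x) = (\<lambda>_. 0)"
proof -
  define D where "D = diff_chain act s m f"
  have D_invariant: "D (act x t) = D x" if t: "t \<in> T" for t x
  proof -
    have "diff_chain act s m (\<lambda>x. f (act x t) - f x)
        = diff_chain act (s(Suc m := t)) m (\<lambda>x. f (act x t) - f x)"
      by (rule diff_chain_cong) auto
    also have "\<dots> = (\<lambda>_. 0)"
      using vanish[OF t] by (simp add: koopman_def)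
    finally have "(\<lambda>x. D (act x t) - D x) = (\<lambda>_. 0)"
      unfolding D_def using diff_chain_koopman_diff[of m act s t f] comm t by metis
    then show ?thesis
      by (metis eq_iff_diff_eq_0)
  qed
  have "diff_chain act s m (orbit_mean \<mu> act f) = orbit_mean \<mu> act D"
    unfolding D_def by (rule diff_chain_orbit_mean[OF mean]) (use comm bdd in auto)
  also have "\<dots> = D"
    by (rule orbit_mean_of_invariant[OF mean]) (rule D_invariant)
  finally show ?thesis
    by (simp add: diff_chain_diff D_def)
qed

lemma invariant_decomposition_exists:
  fixes act :: "'x \<Rightarrow> 'a::monoid_mult \<Rightarrow> 'x" and f :: "'x \<Rightarrow> complex"
  assumes act: "right_action act"
    and amen: "\<And>j. j \<in> {1..n} \<Longrightarrow> left_amenable (Ss j)"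
    and comm: "\<And>i j s t x. i \<in> {1..n} \<Longrightarrow> j \<in> {1..n} \<Longrightarrow> i \<noteq> j \<Longrightarrow>
                 s \<in> Ss i \<Longrightarrow> t \<in> Ss j \<Longrightarrow> act (act x s) t = act (act x t) s"
    and bdd: "bounded (range f)"
    and vanish: "\<And>s. (\<And>j. j \<in> {1..n} \<Longrightarrow> s j \<in> Ss j) \<Longrightarrow> diff_chain act s n f = (\<lambda>_. 0)"
  shows "\<exists>fs. f = (\<lambda>x. \<Sum>j=1..n. fs j x) \<and> (\<forall>j\<in>{1..n}. \<forall>s\<in>Ss j. koopman act s (fs j) = fs j)"
using amen comm bdd vanish proof (induction n arbitrary: f)
  case 0
  then show ?case
    by auto
next
  case (Suc m)
  obtain \<mu> where mean: "left_invariant_mean (Ss (Suc m)) \<mu>"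
    using Suc.prems(1)[of "Suc m"] unfolding left_amenable_def by auto
  define h where "h = (\<lambda>x. f x - orbit_mean \<mu> act f x)"
  have h_bdd: "bounded (range h)"
    unfolding h_def using Suc.prems(3) bounded_orbit_mean[OF mean]
    by (intro bounded_minus_comp) auto
  have h_vanish: "diff_chain act s m h = (\<lambda>_. 0)" if s: "\<And>j. j \<in> {1..m} \<Longrightarrow> s j \<in> Ss j" for s
    unfolding h_def
  proof (rule diff_chain_sub_orbit_mean_eq_zero[OF mean _ Suc.prems(3)])
    show "act (act x u) (s i) = act (act x (s i)) u" if "i \<in> {1..m}" "u \<in> Ss (Suc m)" for i u x
      using Suc.prems(2)[of "Suc m" i u "s i" x] s that by auto
    show "diff_chain act (s(Suc m := t)) (Suc m) f = (\<lambda>_. 0)" if t: "t \<in> Ss (Suc m)" for t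
    proof (rule Suc.prems(4))
      show "(s(Suc m := t)) j \<in> Ss j" if "j \<in> {1..Suc m}" for j
        using s t that by (auto simp: le_Suc_eq)
    qed
  qed
  have "\<exists>fs. h = (\<lambda>x. \<Sum>j=1..m. fs j x) \<and> (\<forall>j\<in>{1..m}. \<forall>s\<in>Ss j. koopman act s (fs j) = fs j)"
    by (rule Suc.IH[OF _ _ h_bdd h_vanish]) (use Suc.prems(1,2) in force)+
  then obtain fs where fs: "h = (\<lambda>x. \<Sum>j=1..m. fs j x)"
      "\<forall>j\<in>{1..m}. \<forall>s\<in>Ss j. koopman act s (fs j) = fs j"
    by blast
  define fs' where "fs' = fs(Suc m := orbit_mean \<mu> act f)"
  have "(\<Sum>j=1..Suc m. fs' j x) = h x + orbit_mean \<mu> act f x" for x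
  proof -
    have "(\<Sum>j=1..m. fs' j x) = (\<Sum>j=1..m. fs j x)"
      unfolding fs'_def by (rule sum.cong) auto
    then show ?thesis
      by (simp add: fs(1) fs'_def)
  qed
  then have "f = (\<lambda>x. \<Sum>j=1..Suc m. fs' j x)"
    unfolding h_def by simp
  moreover have "\<forall>j\<in>{1..Suc m}. \<forall>s\<in>Ss j. koopman act s (fs' j) = fs' j"
    using fs(2) koopman_orbit_mean[OF mean act Suc.prems(3)] by (auto simp: fs'_def le_Suc_eq)
  ultimately show ?case
    by blast
qed

lemma diff_chain_invariant_sum_eq_zero:
  assumes comm: "\<And>i j s t x. i \<in> {1..n} \<Longrightarrow> j \<in> {1..n} \<Longrightarrow> i \<noteq> j \<Longrightarrow>
                 s \<in> Ss i \<Longrightarrow> t \<in> Ss j \<Longrightarrow> act (act x s) t = act (act x t) s"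
    and s: "\<And>j. j \<in> {1..n} \<Longrightarrow> s j \<in> Ss j"
    and inv: "\<forall>j\<in>{1..n}. \<forall>s\<in>Ss j. koopman act s (fs j) = fs j"
  shows "diff_chain act s n (\<lambda>x. \<Sum>j=1..n. fs j x) = (\<lambda>_. 0)"
proof -
  have "diff_chain act s n (fs j) = (\<lambda>_. 0)" if j: "j \<in> {1..n}" for j
  proof (rule diff_chain_eq_zero_if_invariant[OF j])
    have "koopman act (s j) (fs j) = fs j"
      using inv s j by blast
    then show "fs j (act x (s j)) = fs j x" for x
      unfolding koopman_def by (rule fun_cong)
    show "act (act x (s i)) (s j) = act (act x (s j)) (s i)" if "i \<in> {1..n}" for i x
      using comm[of i j "s i" "s j" x] s that j by (cases "i = j") auto
  qed
  then show ?thesis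
    by (simp add: diff_chain_sum)
qed

theorem theorem1p1:
  fixes act :: "'x \<Rightarrow> 'a::monoid_mult \<Rightarrow> 'x"
    and Ss :: "nat \<Rightarrow> 'a set"
    and n :: nat
    and f :: "'x \<Rightarrow> complex"
  assumes act: "right_action act"
    and sub: "\<And>j. j \<in> {1..n} \<Longrightarrow> unital_subsemigroup (Ss j)"
    and amen: "\<And>j. j \<in> {1..n} \<Longrightarrow> left_amenable (Ss j)"
    and comm: "\<And>i j s t x. i \<in> {1..n} \<Longrightarrow> j \<in> {1..n} \<Longrightarrow> i \<noteq> j \<Longrightarrow>
                 s \<in> Ss i \<Longrightarrow> t \<in> Ss j \<Longrightarrow> act (act x s) t = act (act x t) s"
    and bdd: "bounded (range f)"
  shows "(\<forall>s. (\<forall>j\<in>{1..n}. s j \<in> Ss j) \<longrightarrow> diff_chain act s n f = (\<lambda>_. 0))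
     \<longleftrightarrow> (\<exists>fs :: nat \<Rightarrow> 'x \<Rightarrow> complex. f = (\<lambda>x. \<Sum>j=1..n. fs j x) \<and>
            (\<forall>j\<in>{1..n}. \<forall>s\<in>Ss j. koopman act s (fs j) = fs j))"
proof
  assume "\<forall>s. (\<forall>j\<in>{1..n}. s j \<in> Ss j) \<longrightarrow> diff_chain act s n f = (\<lambda>_. 0)"
  then show "\<exists>fs. f = (\<lambda>x. \<Sum>j=1..n. fs j x) \<and> (\<forall>j\<in>{1..n}. \<forall>s\<in>Ss j. koopman act s (fs j) = fs j)"
    by (intro invariant_decomposition_exists[OF act amen comm bdd]) auto
next
  assume "\<exists>fs. f = (\<lambda>x. \<Sum>j=1..n. fs j x) \<and> (\<forall>j\<in>{1..n}. \<forall>s\<in>Ss j. koopman act s (fs j) = fs j)"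
  then obtain fs where f: "f = (\<lambda>x. \<Sum>j=1..n. fs j x)"
      and inv: "\<forall>j\<in>{1..n}. \<forall>s\<in>Ss j. koopman act s (fs j) = fs j"
    by blast
  show "\<forall>s. (\<forall>j\<in>{1..n}. s j \<in> Ss j) \<longrightarrow> diff_chain act s n f = (\<lambda>_. 0)"
    unfolding f by (intro allI impI diff_chain_invariant_sum_eq_zero) (use comm inv in auto)
qed

end
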